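(* Let $T\ge2$. For every $s\ge s_{a,2}(T):=64(\sigma/\Delta_k)^2\log T$, $$a_{k,s,2}:=E\big[\min\{N_{1,s}(\tau_k),T\}\,\mathbf 1(A_{1,s}^c)\,\mathbf 1(G_{1,s})\big]\le T^{-1}.$$
   Context: Setting: arm $k\in[K]$ has i.i.d. rewards $Y_{k,1},Y_{k,2},\dots\sim N(\mu_k,\sigma^2)$; arm 1 is optimal, $\mu_1=\max_k\mu_k$, $\Delta_k=\mu_1-\mu_k>0$ for the suboptimal arm $k$ considered, and $\tau_k=(\mu_1+\mu_k)/2$. For $s\ge1$: $\mathcal H_{k,s}=(Y_{k,1},\dots,Y_{k,s})$, $\bar Y_{k,s}=s^{-1}\sum_{i=1}^sY_{k,i}$, $\mathrm{RSS}_{k,s}=\sum_{i=1}^s(Y_{k,i}-\bar Y_{k,s})^2$. Given $\sigma_a>0$, $\mathrm{PRSS}_{s}=2(s+2)\sigma_a^2$ and $r=\sigma_a/\sigma$. The ReBoot index given $\mathcal H_{k,s}$ is $\hat\mu^*_{k,s}=\bar Y_{k,s}+\frac1{s+2}\sum_{i=1}^{s+2}w_ie_{k,i}$ with $e_{k,i}=Y_{k,i}-\bar Y_{k,s}$ ($i\le s$), $e_{k,s+1}=\sqrt{s+2}\sigma_a$, $e_{k,s+2}=-\sqrt{s+2}\sigma_a$, and $w_i$ i.i.d. $N(0,1)$ independent of the rewards. Define $Q_{k,s}(\tau)=P(\hat\mu^*_{k,s}>\tau\mid\mathcal H_{k,s})$ and $N_{1,s}(\tau)=Q_{1,s}(\tau)^{-1}-1$.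 Events: $A_{1,s}=\{\bar Y_{1,s}-\mu_1>-\Delta_k/4\}$, $G_{1,s}=\{\mathrm{RSS}_{1,s}\le\mathrm{PRSS}_s\}$. *)

theory Defs
  imports "HOL-Probability.Probability"
begin

text \<open>Histories are functions y :: nat => real; the first s rewards are y 1, ..., y s.\<close>

definition normal_measure :: "real \<Rightarrow> real \<Rightarrow> real measure" where
  "normal_measure m sd = density lborel (normal_density m sd)"

definition history_measure :: "nat \<Rightarrow> real \<Rightarrow> real \<Rightarrow> (nat \<Rightarrow> real) measure" where
  "history_measure s mu sd = PiM {1..s} (\<lambda>_. normal_measure mu sd)"

definition weight_measure :: "nat \<Rightarrow> (nat \<Rightarrow> real) measure" where
  "weight_measure s = PiM {1..s+2} (\<lambda>_. normal_measure 0 1)"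

definition ybar :: "nat \<Rightarrow> (nat \<Rightarrow> real) \<Rightarrow> real" where
  "ybar s y = (\<Sum>i=1..s. y i) / real s"

definition RSS :: "nat \<Rightarrow> (nat \<Rightarrow> real) \<Rightarrow> real" where
  "RSS s y = (\<Sum>i=1..s. (y i - ybar s y)^2)"

definition PRSS :: "nat \<Rightarrow> real \<Rightarrow> real" where
  "PRSS s sda = 2 * (real s + 2) * sda^2"

definition resid :: "nat \<Rightarrow> real \<Rightarrow> (nat \<Rightarrow> real) \<Rightarrow> nat \<Rightarrow> real" where
  "resid s sda y i =
     (if i \<le> s then y i - ybar s y
      else if i = s + 1 then sqrt (real s + 2) * sda
      else - sqrt (real s + 2) * sda)"

definition reboot_index :: "nat \<Rightarrow> real \<Rightarrow> (nat \<Rightarrow> real) \<Rightarrow> (nat \<Rightarrow> real) \<Rightarrow> real" where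
  "reboot_index s sda y w =
     ybar s y + (1 / (real s + 2)) * (\<Sum>i=1..s+2. w i * resid s sda y i)"

text \<open>Q_{k,s}(tau) = P(index > tau | history): probability over the weights only.\<close>
definition Qfun :: "nat \<Rightarrow> real \<Rightarrow> real \<Rightarrow> (nat \<Rightarrow> real) \<Rightarrow> real" where
  "Qfun s sda tau y =
     measure (weight_measure s) {w \<in> space (weight_measure s). reboot_index s sda y w > tau}"

definition Nfun :: "nat \<Rightarrow> real \<Rightarrow> real \<Rightarrow> (nat \<Rightarrow> real) \<Rightarrow> real" where
  "Nfun s sda tau y = 1 / Qfun s sda tau y - 1"

text \<open>a_{k,s,2} = E[min(N_{1,s}(tau_k), T) 1(A^c_{1,s}) 1(G_{1,s})], as a nonnegative integral.\<close>
definition a_ks2 :: "nat \<Rightarrow> real \<Rightarrow> real \<Rightarrow> real \<Rightarrow> real \<Rightarrow> real \<Rightarrow> ennreal" where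
  "a_ks2 s mu1 muk sd sda T =
     (let Delta = mu1 - muk; tau = (mu1 + muk) / 2 in
      \<integral>\<^sup>+ y. ennreal (min (Nfun s sda tau y) T
               * (if ybar s y - mu1 \<le> - Delta / 4 then 1 else 0)
               * (if RSS s y \<le> PRSS s sda then 1 else 0))
        \<partial>history_measure s mu1 sd)"

end

theory Submission
  imports Defs
begin

text \<open>Only the event A^c matters: bounding 1(G) by 1 and min(N, T) by T, the quantity is at most
T times the probability that the sample mean of s i.i.d. N(mu1, sd^2) rewards falls
Delta/4 below mu1. A Chernoff bound with the Gaussian moment generating function makes that
probability at most exp(-s Delta^2 / (32 sd^2)), which is at most T^-2 once
s \<ge> 64 (sd/Delta)^2 ln T.\<close>

lemma normal_density_mult_exp:
  fixes m sd l x :: real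
  assumes "sd > 0"
  shows "normal_density m sd x * exp (- l * (x - m)) =
         exp (l^2 * sd^2 / 2) * normal_density (m - l * sd^2) sd x"
proof -
  have square: "-(x - m)\<^sup>2 / (2 * sd\<^sup>2) + (- l * (x - m)) =
        l^2 * sd^2 / 2 + (-(x - (m - l * sd^2))\<^sup>2 / (2 * sd\<^sup>2))"
    using assms by (simp add: divide_simps) (simp add: power2_eq_square algebra_simps power4_eq_xxxx)
  have "exp (-(x - m)\<^sup>2 / (2 * sd\<^sup>2)) * exp (- l * (x - m)) =
        exp (l^2 * sd^2 / 2) * exp (-(x - (m - l * sd^2))\<^sup>2 / (2 * sd\<^sup>2))"
    by (simp only: exp_add[symmetric] square)
  then show ?thesis
    unfolding normal_density_def by (simp only: mult.assoc mult.left_commute)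
qed

lemma nn_integral_normal_exp:
  fixes m sd l :: real
  assumes "sd > 0"
  shows "(\<integral>\<^sup>+ x. ennreal (exp (- l * (x - m))) \<partial>normal_measure m sd) =
         ennreal (exp (l^2 * sd^2 / 2))"
proof -
  have "(\<integral>\<^sup>+ x. ennreal (exp (- l * (x - m))) \<partial>normal_measure m sd) =
        (\<integral>\<^sup>+ x. ennreal (normal_density m sd x * exp (- l * (x - m))) \<partial>lborel)"
    unfolding normal_measure_def
    by (subst nn_integral_density) (auto intro!: nn_integral_cong simp: ennreal_mult)
  also have "\<dots> = (\<integral>\<^sup>+ x. ennreal (exp (l^2 * sd^2 / 2)) *
                        ennreal (normal_density (m - l * sd^2) sd x) \<partial>lborel)"
    by (intro nn_integral_cong)
      (metis normal_density_mult_exp[OF assms] ennreal_mult exp_ge_zero normal_density_nonneg)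
  also have "\<dots> = ennreal (exp (l^2 * sd^2 / 2)) *
                  (\<integral>\<^sup>+ x. ennreal (normal_density (m - l * sd^2) sd x) \<partial>lborel)"
    by (subst nn_integral_cmult) auto
  also have "(\<integral>\<^sup>+ x. ennreal (normal_density (m - l * sd^2) sd x) \<partial>lborel) = 1"
    by (subst nn_integral_eq_integral) (use assms in auto)
  finally show ?thesis by simp
qed

lemma measurable_history_component [measurable]:
  assumes "i \<in> {1..s}"
  shows "(\<lambda>y. y i) \<in> borel_measurable (history_measure s mu sd)"
  unfolding history_measure_def
  using measurable_component_singleton[OF assms, of "\<lambda>_. normal_measure mu sd"]
  by (simp add: normal_measure_def cong: measurable_cong_sets)

lemma measurable_ybar [measurable]: "ybar s \<in> borel_measurable (history_measure s mu sd)"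
  unfolding ybar_def by (intro borel_measurable_divide borel_measurable_sum) simp_all

lemma nn_integral_history_prod_exp:
  assumes "sd > 0"
  shows "(\<integral>\<^sup>+ y. (\<Prod>i\<in>{1..s}. ennreal (exp (- l * (y i - mu)))) \<partial>history_measure s mu sd) =
         ennreal (exp (real s * (l^2 * sd^2 / 2)))"
proof -
  interpret product_sigma_finite "\<lambda>_. normal_measure mu sd"
    unfolding product_sigma_finite_def normal_measure_def
    using prob_space_imp_sigma_finite[OF prob_space_normal_density[OF assms]] by simp
  have "(\<integral>\<^sup>+ y. (\<Prod>i\<in>{1..s}. ennreal (exp (- l * (y i - mu)))) \<partial>history_measure s mu sd) =
        (\<Prod>i\<in>{1..s}. \<integral>\<^sup>+ x. ennreal (exp (- l * (x - mu))) \<partial>normal_measure mu sd)"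
    unfolding history_measure_def
    by (rule product_nn_integral_prod) (simp_all add: normal_measure_def cong: measurable_cong_sets)
  also have "\<dots> = ennreal (exp (l^2 * sd^2 / 2)) ^ s"
    by (simp only: nn_integral_normal_exp[OF assms]) simp
  finally show ?thesis
    by (simp add: ennreal_power exp_of_nat_mult[symmetric] del: exp_of_nat_mult)
qed

lemma ybar_lower_tail_le_prod_exp:
  fixes y :: "nat \<Rightarrow> real"
  assumes "s > 0" and "l \<ge> 0"
  shows "(if ybar s y - mu \<le> - c then 1 else 0) \<le>
         exp (- l * real s * c) * (\<Prod>i\<in>{1..s}. exp (- l * (y i - mu)))"
proof (cases "ybar s y - mu \<le> - c")
  case True
  then have "(\<Sum>i=1..s. y i) / real s \<le> mu - c"
    by (simp add: ybar_def)
  then have "(\<Sum>i=1..s. y i) \<le> real s * (mu - c)"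
    using assms(1) by (simp add: divide_le_eq mult.commute)
  then have "(\<Sum>i=1..s. y i - mu) \<le> - real s * c"
    by (simp add: sum_subtractf algebra_simps)
  then have "l * (\<Sum>i=1..s. y i - mu) \<le> l * (- real s * c)"
    using assms(2) by (rule mult_left_mono)
  then have "0 \<le> - l * real s * c + (\<Sum>i=1..s. - l * (y i - mu))"
    by (simp add: sum_distrib_left sum_negf)
  then have "1 \<le> exp (- l * real s * c + (\<Sum>i=1..s. - l * (y i - mu)))"
    by simp
  also have "\<dots> = exp (- l * real s * c) * (\<Prod>i\<in>{1..s}. exp (- l * (y i - mu)))"
    by (simp only: exp_add exp_sum[OF finite_atLeastAtMost])
  finally show ?thesis
    using True by simp
qed (simp add: prod_nonneg)

lemma ybar_lower_tail_chernoff: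
  assumes "sd > 0" and "s > 0" and "l \<ge> 0"
  shows "(\<integral>\<^sup>+ y. ennreal (if ybar s y - mu \<le> - c then 1 else 0) \<partial>history_measure s mu sd) \<le>
         ennreal (exp (real s * (l^2 * sd^2 / 2 - l * c)))"
proof -
  have "(\<integral>\<^sup>+ y. ennreal (if ybar s y - mu \<le> - c then 1 else 0) \<partial>history_measure s mu sd) \<le>
        (\<integral>\<^sup>+ y. ennreal (exp (- l * real s * c)) *
               (\<Prod>i\<in>{1..s}. ennreal (exp (- l * (y i - mu)))) \<partial>history_measure s mu sd)"
    using ybar_lower_tail_le_prod_exp[OF assms(2,3)]
    by (intro nn_integral_mono) (simp add: prod_ennreal ennreal_mult[symmetric] prod_nonneg)
  also have "\<dots> = ennreal (exp (- l * real s * c)) * ennreal (exp (real s * (l^2 * sd^2 / 2)))"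
  proof (subst nn_integral_cmult)
    show "(\<lambda>y. \<Prod>i\<in>{1..s}. ennreal (exp (- l * (y i - mu)))) \<in> borel_measurable (history_measure s mu sd)"
      by (intro borel_measurable_prod_ennreal measurable_compose[OF measurable_history_component])
        simp_all
  qed (simp only: nn_integral_history_prod_exp[OF assms(1)])
  also have "\<dots> = ennreal (exp (real s * (l^2 * sd^2 / 2 - l * c)))"
    by (simp add: ennreal_mult[symmetric] exp_add[symmetric] algebra_simps)
  finally show ?thesis .
qed

lemma ybar_lower_tail_gaussian:
  assumes "sd > 0" and "s > 0" and "c \<ge> 0"
  shows "(\<integral>\<^sup>+ y. ennreal (if ybar s y - mu \<le> - c then 1 else 0) \<partial>history_measure s mu sd) \<le>
         ennreal (exp (- real s * c^2 / (2 * sd^2)))"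
proof -
  have "real s * ((c / sd^2)^2 * sd^2 / 2 - c / sd^2 * c) = - real s * c^2 / (2 * sd^2)"
    using assms(1) by (simp add: field_simps power2_eq_square)
  then show ?thesis
    using ybar_lower_tail_chernoff[OF assms(1,2), of "c / sd^2" mu c] assms by simp
qed

lemma exp_sample_size_le_inverse_square:
  fixes D sd :: real and T s :: nat
  assumes "sd > 0" and "D > 0" and "T > 0"
    and "real s \<ge> 64 * (sd / D)^2 * ln (real T)"
  shows "exp (- real s * (D / 4)^2 / (2 * sd^2)) \<le> 1 / (real T)^2"
proof -
  have "64 * (sd / D)^2 * ln (real T) * D^2 / (32 * sd^2) \<le> real s * D^2 / (32 * sd^2)"
    using assms by (intro divide_right_mono mult_right_mono) auto
  then have "- real s * (D / 4)^2 / (2 * sd^2) \<le> - 2 * ln (real T)"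
    using assms(1,2) by (simp add: power_divide field_simps)
  then have "exp (- real s * (D / 4)^2 / (2 * sd^2)) \<le> exp (- 2 * ln (real T))"
    by simp
  also have "\<dots> = real T powr (- 2)"
    using assms(3) by (simp add: powr_def)
  also have "\<dots> = 1 / (real T)^2"
    using assms(3) by (simp add: powr_minus_divide)
  finally show ?thesis .
qed

theorem mainTheorem5:
  fixes mu1 muk sd sda :: real and T s :: nat
  assumes "sd > 0" and "sda > 0" and "mu1 > muk"
    and "T \<ge> 2" and "s \<ge> 1"
    and "real s \<ge> 64 * (sd / (mu1 - muk))^2 * ln (real T)"
  shows "a_ks2 s mu1 muk sd sda (real T) \<le> ennreal (1 / real T)"
proof -
  define D where "D = mu1 - muk"
  have "D > 0" and "real T > 0" using assms(3,4) by (simp_all add: D_def)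
  have "a_ks2 s mu1 muk sd sda (real T) \<le>
        (\<integral>\<^sup>+ y. ennreal (real T) * ennreal (if ybar s y - mu1 \<le> - (D / 4) then 1 else 0)
           \<partial>history_measure s mu1 sd)"
    unfolding a_ks2_def Let_def D_def
    by (intro nn_integral_mono) (auto simp: ennreal_mult[symmetric] minus_divide_left intro!: ennreal_leI)
  also have "\<dots> \<le> ennreal (real T) * ennreal (exp (- real s * (D / 4)^2 / (2 * sd^2)))"
    using ybar_lower_tail_gaussian[OF assms(1), of s "D / 4" mu1] \<open>D > 0\<close> assms(5)
    by (subst nn_integral_cmult) (auto intro: mult_left_mono)
  also have "\<dots> \<le> ennreal (real T * (1 / (real T)^2))"
  proof -
    have "real T * exp (- real s * (D / 4)^2 / (2 * sd^2)) \<le> real T * (1 / (real T)^2)"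
      using exp_sample_size_le_inverse_square[OF assms(1) \<open>D > 0\<close> _ assms(6)[folded D_def]]
        \<open>real T > 0\<close> by (intro mult_left_mono) simp_all
    then show ?thesis
      by (metis ennreal_leI ennreal_mult exp_ge_zero of_nat_0_le_iff)
  qed
  also have "\<dots> = ennreal (1 / real T)"
    by (simp add: power2_eq_square)
  finally show ?thesis .
qed

end
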